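(* (a) Let $\Gamma$ be a perfect matching drawing containing vertices $x,p,q,y$ with matching edges $xp$ and $qy$, where $p$ and $q$ are joined by exactly two non-matching edges which together bound a disk whose interior meets no other part of $\Gamma$, all of this lying in a disk $D$ that meets $\Gamma$ only in these vertices and edges and initial segments of the two other edges at $x$ and of the two other edges at $y$. Let $\Gamma'$ be obtained by replacing, inside $D$, the vertices $p,q$, the two edges between them and the matching edges $xp,qy$ by a single matching edge $xy$. Then $$\langle\Gamma\rangle_2(1)=2\,\langle\Gamma'\rangle_2(1).$$ (b) If $G$ is a planar trivalent graph with perfect matching $M$ containing such a configuration in a plane embedding, and $(G',M')$ is obtained by the same replacement, then $|G:M|_2=2\,|G':M'|_2$.
   Context: Graphs are finite and may have multiple edges; trivalent means every vertex has degree $3$. $|G:M|_2$ denotes the number of $2$-factors (spanning subgraphs in which every vertex has degree $2$) of $G$ that contain every edge of $M$. A perfect matching drawing $\Gamma$ is a collection of trivalent vertices, edges and vertex-free closed curves drawn in the $2$-sphere by a generic immersion (transverse double points away from vertices, carrying no extra data), together with a set $M$ of edges forming a perfect matching of the vertices. For a matching edge $e=uv$ with other edge-ends $\alpha,\beta$ at $u$ and $\gamma,\delta$ at $v$ in cyclic order $\alpha,\beta,\delta,\gamma$ around a small disk about $e$, the $0$-resolution deletes $e,u,v$ and joins $\alpha$–$\gamma$ and $\beta$–$\delta$ by disjoint arcs, and the $1$-resolution joins $\alpha$–$\delta$ and $\beta$–$\gamma$ by two arcs crossing once. For a state $s:M\to\{0,1\}$, resolving every matching edge gives $c(s)$ immersed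 closed curves, and the $2$-factor bracket is $\langle\Gamma\rangle_2(z)=\sum_s(-z)^{|s|}(z+z^{-1})^{c(s)}\in\mathbb{Z}[z,z^{-1}]$, $|s|$ being the number of edges assigned $1$. *)

theory Defs
  imports Complex_Main
begin

(* Combinatorial model of a (trivalent) perfect matching drawing:
   darts (half-edges) Ds; eps = edge involution (the other end of the edge);
   sig = rotation at a vertex (counterclockwise successor, w.r.t. the
   orientation of the sphere); vertices = sig-orbits (all of size 3);
   M = set of darts of the matching edges. *)

definition orbit3 :: "('d \<Rightarrow> 'd) \<Rightarrow> 'd \<Rightarrow> 'd set" where
  "orbit3 sig d = {d, sig d, sig (sig d)}"

definition pm_drawing :: "'d set \<Rightarrow> ('d \<Rightarrow> 'd) \<Rightarrow> ('d \<Rightarrow> 'd) \<Rightarrow> 'd set \<Rightarrow> bool" where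
  "pm_drawing Ds eps sig M \<longleftrightarrow>
     finite Ds \<and>
     (\<forall>d\<in>Ds. eps d \<in> Ds \<and> eps d \<noteq> d \<and> eps (eps d) = d) \<and>
     (\<forall>d\<in>Ds. sig d \<in> Ds \<and> sig d \<noteq> d \<and> sig (sig (sig d)) = d) \<and>
     M \<subseteq> Ds \<and> (\<forall>d\<in>M. eps d \<in> M) \<and>
     (\<forall>d\<in>Ds. card (orbit3 sig d \<inter> M) = 1)"

(* The resolution arc at the matching edge adjacent to the non-matching dart a.
   S = set of darts of matching edges in state 1.  With e_u the matching dart
   at the vertex u of a, e_v = eps e_u, the cyclic order around the edge is
   alpha = sig e_u, beta = sig^2 e_u, delta = sig e_v, gamma = sig^2 e_v. *)
definition res_partner :: "('d \<Rightarrow> 'd) \<Rightarrow> ('d \<Rightarrow> 'd) \<Rightarrow> 'd set \<Rightarrow> 'd set \<Rightarrow> 'd \<Rightarrow> 'd" where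
  "res_partner eps sig M S a =
     (if sig a \<in> M then
        (let e = sig a in if e \<in> S then sig (sig (eps e)) else sig (eps e))
      else
        (let e = sig (sig a) in if e \<in> S then sig (eps e) else sig (sig (eps e))))"

definition curve_rel :: "'d set \<Rightarrow> ('d \<Rightarrow> 'd) \<Rightarrow> ('d \<Rightarrow> 'd) \<Rightarrow> 'd set \<Rightarrow> 'd set \<Rightarrow> 'd rel" where
  "curve_rel Ds eps sig M S =
     {(a, b). a \<in> Ds - M \<and> (b = eps a \<or> b = res_partner eps sig M S a)}"

(* number of closed curves through vertices after resolving by state S *)
definition ncurves :: "'d set \<Rightarrow> ('d \<Rightarrow> 'd) \<Rightarrow> ('d \<Rightarrow> 'd) \<Rightarrow> 'd set \<Rightarrow> 'd set \<Rightarrow> nat" where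
  "ncurves Ds eps sig M S =
     card ((Ds - M) // ((curve_rel Ds eps sig M S \<union> (curve_rel Ds eps sig M S)\<inverse>)\<^sup>*))"

(* states: sets of matching edges (as eps-closed sets of matching darts) assigned 1 *)
definition states :: "('d \<Rightarrow> 'd) \<Rightarrow> 'd set \<Rightarrow> 'd set set" where
  "states eps M = {S. S \<subseteq> M \<and> (\<forall>d\<in>S. eps d \<in> S)}"

(* 2-factor bracket, with k vertex-free closed curves, evaluated at z *)
definition bracket2 :: "'d set \<Rightarrow> ('d \<Rightarrow> 'd) \<Rightarrow> ('d \<Rightarrow> 'd) \<Rightarrow> 'd set \<Rightarrow> nat \<Rightarrow> real \<Rightarrow> real" where
  "bracket2 Ds eps sig M k z =
     (\<Sum>S\<in>states eps M. (- z) ^ (card S div 2) * (z + 1 / z) ^ (ncurves Ds eps sig M S + k))"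

(* the local configuration: x-p (matching), p=q double edge bounding an empty
   bigon face, q-y (matching); xp at x, px at p, p1,p2 at p, q1,q2 at q,
   qy at q, yq at y *)
definition config :: "'d set \<Rightarrow> ('d \<Rightarrow> 'd) \<Rightarrow> ('d \<Rightarrow> 'd) \<Rightarrow> 'd set \<Rightarrow>
    'd \<Rightarrow> 'd \<Rightarrow> 'd \<Rightarrow> 'd \<Rightarrow> 'd \<Rightarrow> 'd \<Rightarrow> 'd \<Rightarrow> 'd \<Rightarrow> bool" where
  "config Ds eps sig M xp px p1 p2 q1 q2 qy yq \<longleftrightarrow>
     {xp, px, p1, p2, q1, q2, qy, yq} \<subseteq> Ds \<and>
     distinct [px, p1, p2, q1, q2, qy] \<and>
     xp \<notin> {px, p1, p2, q1, q2, qy} \<and> yq \<notin> {px, p1, p2, q1, q2, qy} \<and>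
     yq \<notin> orbit3 sig xp \<and>
     eps xp = px \<and> eps yq = qy \<and> eps p1 = q1 \<and> eps p2 = q2 \<and>
     sig px = p2 \<and> sig p2 = p1 \<and> sig p1 = px \<and>
     sig qy = q1 \<and> sig q1 = q2 \<and> sig q2 = qy \<and>
     px \<in> M \<and> qy \<in> M"

definition gen_rel :: "'d set \<Rightarrow> ('d \<Rightarrow> 'd) \<Rightarrow> 'd rel" where
  "gen_rel Ds f = {(a, b). a \<in> Ds \<and> b = f a}"

definition orbits_count :: "'d set \<Rightarrow> 'd rel \<Rightarrow> nat" where
  "orbits_count Ds r = card (Ds // ((r \<union> r\<inverse>)\<^sup>*))"

(* genus-0 (spherical/plane) rotation system: V - E + F = 2 * #components *)
definition planar_rot :: "'d set \<Rightarrow> ('d \<Rightarrow> 'd) \<Rightarrow> ('d \<Rightarrow> 'd) \<Rightarrow> bool" where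
  "planar_rot Ds eps sig \<longleftrightarrow>
     int (orbits_count Ds (gen_rel Ds sig)) - int (orbits_count Ds (gen_rel Ds eps))
       + int (orbits_count Ds (gen_rel Ds (\<lambda>d. sig (eps d))))
     = 2 * int (orbits_count Ds (gen_rel Ds sig \<union> gen_rel Ds eps))"

(* |G:M|_2 : number of 2-factors (eps-closed dart sets, every vertex has
   exactly two darts) containing all matching edges *)
definition two_factors_M :: "'d set \<Rightarrow> ('d \<Rightarrow> 'd) \<Rightarrow> ('d \<Rightarrow> 'd) \<Rightarrow> 'd set \<Rightarrow> nat" where
  "two_factors_M Ds eps sig M =
     card {F. F \<subseteq> Ds \<and> (\<forall>d\<in>F. eps d \<in> F) \<and> M \<subseteq> F \<and>
              (\<forall>d\<in>Ds. card (orbit3 sig d \<inter> F) = 2)}"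

end

theory Submission
  imports Defs
begin

text \<open>The bigon never carries a closed curve of its own: in every state each of its four
  darts is joined by the resolution at p or q to a dart at x or at y. Contracting the bigon
  therefore matches the curves of a state S with those of the reduced drawing in the state
  that agrees with S elsewhere and gives xy the state 1 exactly when S gives xp and qy
  different states. At z = 1 the weight of a state is a sign times a power of 2, so the
  four states of xp and qy add up to twice the two states of xy.

  Every 2-factor contains px and qy and hence exactly one of the two bigon edges, and
  deleting p and q is a two-to-one correspondence with the 2-factors of the reduced
  graph.\<close>

lemma card_image_eq_if_same_kernel:
  assumes "\<And>a b. a \<in> A \<Longrightarrow> b \<in> A \<Longrightarrow> f a = f b \<longleftrightarrow> g a = g b"
  shows "card (f ` A) = card (g ` A)"
proof -
  let ?h = "\<lambda>c. g (inv_into A f c)"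
  have h: "?h (f a) = g a" if "a \<in> A" for a
    using assms[of "inv_into A f (f a)" a] that by (simp add: inv_into_into f_inv_into_f)
  have "g ` A = ?h ` (f ` A)" using h by (auto simp: image_iff)
  moreover have "inj_on ?h (f ` A)"
  proof (rule inj_onI)
    fix c c' assume "c \<in> f ` A" "c' \<in> f ` A" "?h c = ?h c'"
    then obtain a b where "a \<in> A" "b \<in> A" "c = f a" "c' = f b" "g a = g b"
      using h by auto
    then show "c = c'" using assms by blast
  qed
  ultimately show ?thesis by (simp add: card_image)
qed

lemma card_quotient_eq_if_same_kernel:
  assumes "equiv UNIV r" "equiv UNIV s" "f ` A = B"
    and "\<And>a b. a \<in> A \<Longrightarrow> b \<in> A \<Longrightarrow> (a, b) \<in> r \<longleftrightarrow> (f a, f b) \<in> s"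
  shows "card (A // r) = card (B // s)"
proof -
  have "A // r = (\<lambda>a. r `` {a}) ` A" "B // s = (\<lambda>a. s `` {f a}) ` A"
    using assms(3) unfolding quotient_def by auto
  then show ?thesis
    using card_image_eq_if_same_kernel[of A "\<lambda>a. r `` {a}" "\<lambda>a. s `` {f a}"] assms(4)
      eq_equiv_class_iff[OF assms(1)] eq_equiv_class_iff[OF assms(2)] by simp
qed

lemma equiv_rtrancl_symcl: "equiv UNIV ((R \<union> R\<inverse>)\<^sup>*)"
  by (rule equivI) (auto simp: refl_on_def sym_rtrancl[OF sym_Un_converse] trans_rtrancl)

lemma rtrancl_symcl_sym: "(a, b) \<in> (R \<union> R\<inverse>)\<^sup>* \<Longrightarrow> (b, a) \<in> (R \<union> R\<inverse>)\<^sup>*"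
  by (metis converse_Un converse_converse rtrancl_converseI sup_commute)

lemma card_components_eq_if_contraction:
  assumes "f ` A = B"
    and R_S: "\<And>a b. (a, b) \<in> R \<Longrightarrow> (f a, f b) \<in> (S \<union> S\<inverse>)\<^sup>*"
    and S_R: "\<And>a b. (a, b) \<in> S \<Longrightarrow> (a, b) \<in> (R \<union> R\<inverse>)\<^sup>*"
    and contract: "\<And>a. a \<in> A \<Longrightarrow> (a, f a) \<in> (R \<union> R\<inverse>)\<^sup>*"
  shows "card (A // (R \<union> R\<inverse>)\<^sup>*) = card (B // (S \<union> S\<inverse>)\<^sup>*)"
proof (rule card_quotient_eq_if_same_kernel[OF equiv_rtrancl_symcl equiv_rtrancl_symcl assms(1)])
  have forth: "(f a, f b) \<in> (S \<union> S\<inverse>)\<^sup>*" if "(a, b) \<in> (R \<union> R\<inverse>)\<^sup>*" for a b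
    using that
  proof induction
    case (step b c)
    from step.hyps(2) have "(f b, f c) \<in> (S \<union> S\<inverse>)\<^sup>*"
      using R_S[of b c] R_S[of c b] rtrancl_symcl_sym[of "f c" "f b" S] by auto
    with step.IH show ?case by (rule rtrancl_trans)
  qed simp
  have "S \<union> S\<inverse> \<subseteq> (R \<union> R\<inverse>)\<^sup>*"
  proof
    fix p assume "p \<in> S \<union> S\<inverse>"
    then obtain a b where "p = (a, b)" "(a, b) \<in> S \<or> (b, a) \<in> S" by (cases p) auto
    then show "p \<in> (R \<union> R\<inverse>)\<^sup>*"
      using S_R[of a b] S_R[of b a] rtrancl_symcl_sym[of b a R] by auto
  qed
  then have S_sub_R: "(S \<union> S\<inverse>)\<^sup>* \<subseteq> (R \<union> R\<inverse>)\<^sup>*"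
    by (rule rtrancl_subset_rtrancl)
  fix a b assume "a \<in> A" "b \<in> A"
  show "(a, b) \<in> (R \<union> R\<inverse>)\<^sup>* \<longleftrightarrow> (f a, f b) \<in> (S \<union> S\<inverse>)\<^sup>*"
  proof
    assume "(f a, f b) \<in> (S \<union> S\<inverse>)\<^sup>*"
    then have "(f a, f b) \<in> (R \<union> R\<inverse>)\<^sup>*" using S_sub_R by blast
    moreover have "(a, f a) \<in> (R \<union> R\<inverse>)\<^sup>*" using contract[OF \<open>a \<in> A\<close>] .
    moreover have "(f b, b) \<in> (R \<union> R\<inverse>)\<^sup>*"
      using rtrancl_symcl_sym[OF contract[OF \<open>b \<in> A\<close>]] .
    ultimately show "(a, b) \<in> (R \<union> R\<inverse>)\<^sup>*" by (meson rtrancl_trans)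
  qed (rule forth)
qed

lemma states_union:
  assumes "A \<inter> B = {}" "\<forall>d\<in>A. eps d \<in> A" "\<forall>d\<in>B. eps d \<in> B"
  shows "states eps (A \<union> B) = (\<lambda>(S, T). S \<union> T) ` (states eps A \<times> states eps B)"
proof
  show "states eps (A \<union> B) \<subseteq> (\<lambda>(S, T). S \<union> T) ` (states eps A \<times> states eps B)"
  proof
    fix U assume U: "U \<in> states eps (A \<union> B)"
    then have "U \<inter> A \<in> states eps A" "U \<inter> B \<in> states eps B" "U = (U \<inter> A) \<union> (U \<inter> B)"
      using assms(2,3) by (auto simp: states_def)
    then show "U \<in> (\<lambda>(S, T). S \<union> T) ` (states eps A \<times> states eps B)"
      by (auto intro!: image_eqI[where x = "(U \<inter> A, U \<inter> B)"])
  qed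
qed (auto simp: states_def)

lemma inj_on_union_states:
  assumes "A \<inter> B = {}"
  shows "inj_on (\<lambda>(S, T). S \<union> T) (states eps A \<times> states eps B)"
proof (rule inj_onI, clarify)
  fix S T S' T'
  assume "S \<in> states eps A" "T \<in> states eps B" "S' \<in> states eps A" "T' \<in> states eps B"
    and eq: "S \<union> T = S' \<union> T'"
  then have "S = (S \<union> T) \<inter> A" "S' = (S' \<union> T') \<inter> A" "T = (S \<union> T) \<inter> B" "T' = (S' \<union> T') \<inter> B"
    using assms by (auto simp: states_def)
  then show "S = S' \<and> T = T'" using eq by metis
qed

lemma sum_states_union:
  assumes "A \<inter> B = {}" "\<forall>d\<in>A. eps d \<in> A" "\<forall>d\<in>B. eps d \<in> B"
  shows "sum h (states eps (A \<union> B)) = (\<Sum>S\<in>states eps A. \<Sum>T\<in>states eps B. h (S \<union> T))"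
  unfolding states_union[OF assms] sum.reindex[OF inj_on_union_states[OF assms(1)]]
    sum.cartesian_product' by simp

lemma states_edge:
  assumes "eps (eps a) = a"
  shows "states eps {a, eps a} = {{}, {a, eps a}}"
proof -
  have "S = {} \<or> S = {a, eps a}" if "S \<subseteq> {a, eps a}" "\<forall>d\<in>S. eps d \<in> S" for S
    using that assms by (cases "a \<in> S"; cases "eps a \<in> S") auto
  then show ?thesis using assms by (auto simp: states_def)
qed

lemma states_cong: "(\<And>d. d \<in> A \<Longrightarrow> eps d = eps' d) \<Longrightarrow> states eps A = states eps' A"
  by (auto simp: states_def subset_iff)

lemma curve_relI:
  "a \<in> A - B \<Longrightarrow> b = e a \<or> b = res_partner e s B S0 a \<Longrightarrow> (a, b) \<in> curve_rel A e s B S0"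
  unfolding curve_rel_def by blast

definition bracket_term ::
    "'d set \<Rightarrow> ('d \<Rightarrow> 'd) \<Rightarrow> ('d \<Rightarrow> 'd) \<Rightarrow> 'd set \<Rightarrow> nat \<Rightarrow> real \<Rightarrow> 'd set \<Rightarrow> real" where
  "bracket_term Ds eps sig M k z S = (- z) ^ (card S div 2) * (z + 1 / z) ^ (ncurves Ds eps sig M S + k)"

lemma bracket2_eq_sum: "bracket2 Ds eps sig M k z = sum (bracket_term Ds eps sig M k z) (states eps M)"
  by (simp add: bracket2_def bracket_term_def)

definition two_factor_sets ::
    "'d set \<Rightarrow> ('d \<Rightarrow> 'd) \<Rightarrow> ('d \<Rightarrow> 'd) \<Rightarrow> 'd set \<Rightarrow> 'd set set" where
  "two_factor_sets Ds eps sig M = {F. F \<subseteq> Ds \<and> (\<forall>d\<in>F. eps d \<in> F) \<and> M \<subseteq> F \<and>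
     (\<forall>d\<in>Ds. card (orbit3 sig d \<inter> F) = 2)}"

lemma two_factors_M_eq_card: "two_factors_M Ds eps sig M = card (two_factor_sets Ds eps sig M)"
  by (simp add: two_factors_M_def two_factor_sets_def)

locale matching_drawing =
  fixes Ds :: "'d set" and eps sig :: "'d \<Rightarrow> 'd" and M :: "'d set"
  assumes pm_drawing: "pm_drawing Ds eps sig M"
begin

lemma finite_darts: "finite Ds"
  and eps_in: "d \<in> Ds \<Longrightarrow> eps d \<in> Ds"
  and eps_eps: "d \<in> Ds \<Longrightarrow> eps (eps d) = d"
  and sig_in: "d \<in> Ds \<Longrightarrow> sig d \<in> Ds"
  and sig_neq: "d \<in> Ds \<Longrightarrow> sig d \<noteq> d"
  and sig_sig_sig: "d \<in> Ds \<Longrightarrow> sig (sig (sig d)) = d"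
  and matching_subset: "M \<subseteq> Ds"
  and eps_matching: "d \<in> M \<Longrightarrow> eps d \<in> M"
  and card_orbit_matching: "d \<in> Ds \<Longrightarrow> card (orbit3 sig d \<inter> M) = 1"
  using pm_drawing by (simp_all add: pm_drawing_def)

lemma orbit3_distinct: "d \<in> Ds \<Longrightarrow> distinct [d, sig d, sig (sig d)]"
  by (metis distinct_length_2_or_more distinct_singleton sig_in sig_neq sig_sig_sig)

lemma matching_dart_unique:
  assumes "d \<in> Ds"
  shows "(d \<in> M \<and> sig d \<notin> M \<and> sig (sig d) \<notin> M) \<or> (d \<notin> M \<and> sig d \<in> M \<and> sig (sig d) \<notin> M)
       \<or> (d \<notin> M \<and> sig d \<notin> M \<and> sig (sig d) \<in> M)"
  using orbit3_distinct[OF assms] card_orbit_matching[OF assms]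
  by (cases "d \<in> M"; cases "sig d \<in> M"; cases "sig (sig d) \<in> M")
    (auto simp: orbit3_def Int_insert_left)

lemma orbit3_sig:
  assumes "c \<in> Ds" "d \<in> orbit3 sig c"
  shows "orbit3 sig d = orbit3 sig c"
  using assms sig_sig_sig[OF assms(1)] by (auto simp: orbit3_def insert_commute)

lemma orbit3_disjoint:
  assumes "c \<in> Ds" "d \<in> Ds" "d \<notin> orbit3 sig c"
  shows "orbit3 sig c \<inter> orbit3 sig d = {}"
proof (rule ccontr)
  assume "orbit3 sig c \<inter> orbit3 sig d \<noteq> {}"
  then obtain e where "e \<in> orbit3 sig c" "e \<in> orbit3 sig d" by blast
  then have "orbit3 sig d = orbit3 sig c"
    using orbit3_sig[OF assms(1)] orbit3_sig[OF assms(2)] by metis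
  then show False using assms(3) by (metis insertI1 orbit3_def)
qed

end

locale bigon_config = matching_drawing +
  fixes xp px p1 p2 q1 q2 qy yq :: 'd
  assumes config: "config Ds eps sig M xp px p1 p2 q1 q2 qy yq"
begin

abbreviation "xa \<equiv> sig xp"
abbreviation "xb \<equiv> sig (sig xp)"
abbreviation "ya \<equiv> sig yq"
abbreviation "yb \<equiv> sig (sig yq)"

lemma config_darts: "xp \<in> Ds" "px \<in> Ds" "p1 \<in> Ds" "p2 \<in> Ds" "q1 \<in> Ds" "q2 \<in> Ds" "qy \<in> Ds" "yq \<in> Ds"
  and config_eqs: "eps xp = px" "eps yq = qy" "eps p1 = q1" "eps p2 = q2"
    "sig px = p2" "sig p2 = p1" "sig p1 = px" "sig qy = q1" "sig q1 = q2" "sig q2 = qy"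
  and config_matching: "px \<in> M" "qy \<in> M"
  using config by (simp_all add: config_def)

lemma config_eqs': "eps px = xp" "eps qy = yq" "eps q1 = p1" "eps q2 = p2"
  "sig (sig (sig xp)) = xp" "sig (sig (sig yq)) = yq"
  using eps_eps sig_sig_sig config_darts config_eqs by metis+

lemma matching_darts: "px \<in> M" "qy \<in> M" "xp \<in> M" "yq \<in> M"
  using config_matching eps_matching config_eqs' by metis+

lemma vertex_orbits: "orbit3 sig xp = {xp, xa, xb}" "orbit3 sig yq = {yq, ya, yb}"
  "orbit3 sig px = {px, p1, p2}" "orbit3 sig qy = {qy, q1, q2}"
  using config_eqs by (auto simp: orbit3_def)

lemma local_darts_distinct:
  "distinct [xp, xa, xb, yq, ya, yb, px, p1, p2, qy, q1, q2]"
proof -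
  have "yq \<notin> orbit3 sig xp" and "xp \<notin> {px, p1, p2, q1, q2, qy}" "yq \<notin> {px, p1, p2, q1, q2, qy}"
    and "distinct [px, p1, p2, q1, q2, qy]"
    using config by (simp_all add: config_def)
  then have "orbit3 sig xp \<inter> orbit3 sig yq = {}" "orbit3 sig xp \<inter> orbit3 sig px = {}"
    "orbit3 sig xp \<inter> orbit3 sig qy = {}" "orbit3 sig yq \<inter> orbit3 sig px = {}"
    "orbit3 sig yq \<inter> orbit3 sig qy = {}" "orbit3 sig px \<inter> orbit3 sig qy = {}"
    using orbit3_disjoint[of xp yq] orbit3_disjoint[of px xp] orbit3_disjoint[of qy xp]
      orbit3_disjoint[of px yq] orbit3_disjoint[of qy yq] orbit3_disjoint[of qy px]
      config_darts vertex_orbits by (auto simp: Int_commute)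
  moreover have "distinct [xp, xa, xb]" "distinct [yq, ya, yb]"
    using orbit3_distinct config_darts by blast+
  moreover have "distinct [px, p1, p2]" "distinct [qy, q1, q2]"
    using \<open>distinct [px, p1, p2, q1, q2, qy]\<close> by auto
  ultimately show ?thesis
    unfolding vertex_orbits by (auto simp: Int_Un_distrib Int_commute)
qed

lemma local_darts_distinct_rev:
  "distinct [q2, q1, qy, p2, p1, px, yb, ya, yq, xb, xa, xp]"
  using local_darts_distinct by (metis distinct_rev rev.simps append.simps)

lemmas local_darts_neq = local_darts_distinct[simplified] local_darts_distinct_rev[simplified]

lemma non_matching_darts:
  "xa \<notin> M" "xb \<notin> M" "ya \<notin> M" "yb \<notin> M" "p1 \<notin> M" "p2 \<notin> M" "q1 \<notin> M" "q2 \<notin> M"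
  using matching_dart_unique config_darts matching_darts config_eqs by metis+

abbreviation "local_darts \<equiv> {xp, xa, xb, yq, ya, yb, px, p1, p2, qy, q1, q2}"
abbreviation "bigon_darts \<equiv> {p1, p2, q1, q2}"
abbreviation "outer_darts \<equiv> {xa, xb, ya, yb}"

abbreviation "Ds' \<equiv> Ds - {px, p1, p2, q1, q2, qy}"
abbreviation "eps' \<equiv> eps(xp := yq, yq := xp)"
abbreviation "M' \<equiv> M - {px, qy}"

lemma sig_outside_local_darts:
  assumes "u \<in> Ds" "u \<notin> local_darts"
  shows "sig u \<notin> local_darts" "sig (sig u) \<notin> local_darts"
proof -
  have "u \<notin> orbit3 sig xp" "u \<notin> orbit3 sig yq" "u \<notin> orbit3 sig px" "u \<notin> orbit3 sig qy"
    using assms(2) unfolding vertex_orbits by simp_all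
  then have "orbit3 sig xp \<inter> orbit3 sig u = {}" "orbit3 sig yq \<inter> orbit3 sig u = {}"
     "orbit3 sig px \<inter> orbit3 sig u = {}" "orbit3 sig qy \<inter> orbit3 sig u = {}"
    using orbit3_disjoint config_darts assms(1) by blast+
  then have "orbit3 sig u \<inter> local_darts = {}"
    unfolding vertex_orbits by blast
  then show "sig u \<notin> local_darts" "sig (sig u) \<notin> local_darts"
    unfolding orbit3_def by blast+
qed

lemma matching_dart_before_bigon:
  assumes "c \<in> Ds" "c \<in> M" "sig c \<in> bigon_darts \<or> sig (sig c) \<in> bigon_darts"
  shows "c \<in> {px, qy}"
proof -
  have "c = sig (sig (sig c))" using sig_sig_sig assms by simp
  then show ?thesis using assms(2,3) config_eqs non_matching_darts by auto
qed

end

locale bigon_states = bigon_config +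
  fixes S S'
  assumes states_agree: "\<And>e. e \<notin> {xp, px, yq, qy} \<Longrightarrow> e \<in> S \<longleftrightarrow> e \<in> S'"
    and state_xp: "px \<in> S \<longleftrightarrow> xp \<in> S" and state_yq: "qy \<in> S \<longleftrightarrow> yq \<in> S"
    and state_xy: "xp \<in> S' \<longleftrightarrow> (xp \<in> S) \<noteq> (yq \<in> S)"
    and state_yx: "yq \<in> S' \<longleftrightarrow> xp \<in> S'"
begin

abbreviation "res \<equiv> res_partner eps sig M S"
abbreviation "res' \<equiv> res_partner eps' sig M' S'"
abbreviation "R \<equiv> curve_rel Ds eps sig M S"
abbreviation "R' \<equiv> curve_rel Ds' eps' sig M' S'"

lemma res_local:
  "res xa = (if xp \<in> S then p2 else p1)"
  "res xb = (if xp \<in> S then p1 else p2)"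
  "res ya = (if yq \<in> S then q1 else q2)"
  "res yb = (if yq \<in> S then q2 else q1)"
  "res p1 = (if xp \<in> S then xb else xa)"
  "res p2 = (if xp \<in> S then xa else xb)"
  "res q1 = (if yq \<in> S then ya else yb)"
  "res q2 = (if yq \<in> S then yb else ya)"
  unfolding res_partner_def
  using local_darts_neq config_eqs config_eqs' matching_darts non_matching_darts state_xp state_yq
  by (simp_all add: Let_def)

lemma res'_local:
  "res' xa = (if xp \<in> S' then ya else yb)"
  "res' xb = (if xp \<in> S' then yb else ya)"
  "res' ya = (if xp \<in> S' then xa else xb)"
  "res' yb = (if xp \<in> S' then xb else xa)"
  unfolding res_partner_def
  using local_darts_neq config_eqs config_eqs' matching_darts non_matching_darts state_yx
  by (simp_all add: Let_def)

lemma away_from_config: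
  assumes "u \<in> Ds" "u \<notin> M" "u \<notin> local_darts"
  shows "res' u = res u" "res u \<notin> bigon_darts" "eps' u = eps u" "eps u \<notin> bigon_darts"
    "u \<in> Ds' - M'"
proof -
  note away = sig_outside_local_darts[OF assms(1,3)]
  have "sig u \<in> M' \<longleftrightarrow> sig u \<in> M" "sig (sig u) \<in> M' \<longleftrightarrow> sig (sig u) \<in> M"
    "eps' (sig u) = eps (sig u)" "eps' (sig (sig u)) = eps (sig (sig u))"
    "sig u \<in> S' \<longleftrightarrow> sig u \<in> S" "sig (sig u) \<in> S' \<longleftrightarrow> sig (sig u) \<in> S"
    using away states_agree[of "sig u"] states_agree[of "sig (sig u)"] by simp_all
  then show "res' u = res u" unfolding res_partner_def by (simp add: Let_def)
  show "eps' u = eps u" "u \<in> Ds' - M'" using assms by simp_all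
  show "eps u \<notin> bigon_darts"
  proof
    assume "eps u \<in> bigon_darts"
    then have "eps (eps u) \<in> {eps p1, eps p2, eps q1, eps q2}" by blast
    then have "u \<in> {q1, q2, p1, p2}" using eps_eps[OF assms(1)] config_eqs config_eqs' by simp
    then show False using assms by simp
  qed
  show "res u \<notin> bigon_darts"
  proof
    assume res_u: "res u \<in> bigon_darts"
    obtain e where e: "e \<in> {sig u, sig (sig u)}" "e \<in> M"
      "res u = sig (eps e) \<or> res u = sig (sig (eps e))"
    proof (cases "sig u \<in> M")
      case True
      then show ?thesis using that[of "sig u"] unfolding res_partner_def Let_def by simp
    next
      case False
      then have "sig (sig u) \<in> M" using matching_dart_unique[OF assms(1)] assms(2) by blast
      then show ?thesis using False that[of "sig (sig u)"] unfolding res_partner_def Let_def by simp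
    qed
    have e_Ds: "e \<in> Ds" using e matching_subset by auto
    have "eps e \<in> {px, qy}"
      by (rule matching_dart_before_bigon) (use e(2,3) res_u eps_in[OF e_Ds] eps_matching in auto)
    then have "eps (eps e) \<in> {eps px, eps qy}" by blast
    then have "e \<in> {xp, yq}" using eps_eps[OF e_Ds] config_eqs' by simp
    then show False using e away by blast
  qed
qed

lemma outer_dart:
  assumes "u \<in> outer_darts"
  shows "res u \<in> bigon_darts" "res (res u) = u" "res' u = res (eps (res u))"
    "eps' u = eps u" "eps u \<notin> bigon_darts" "u \<in> Ds' - M'" "u \<in> Ds - M"
proof -
  show "res u \<in> bigon_darts" "res (res u) = u" "res' u = res (eps (res u))"
    using assms by (elim insertE emptyE; cases "xp \<in> S"; cases "yq \<in> S";
        simp add: res_local res'_local config_eqs config_eqs' state_xy)+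
  have u: "u \<notin> {q1, q2, p1, p2, px, qy}" "u \<notin> {xp, yq}" using assms by (auto simp: local_darts_neq)
  then show "eps' u = eps u" by auto
  show "u \<in> Ds' - M'" "u \<in> Ds - M"
    using assms u config_darts sig_in non_matching_darts by auto
  show "eps u \<notin> bigon_darts"
  proof
    assume "eps u \<in> bigon_darts"
    then have "eps (eps u) \<in> {eps p1, eps p2, eps q1, eps q2}" by blast
    moreover have "u \<in> Ds" using assms config_darts sig_in by blast
    ultimately have "u \<in> {q1, q2, p1, p2}" using eps_eps[of u] config_eqs config_eqs' by simp
    then show False using u by simp
  qed
qed

lemma bigon_dart:
  assumes "w \<in> bigon_darts"
  shows "res w \<in> outer_darts" "res (res w) = w" "eps w \<in> bigon_darts"
    "res' (res w) = res (eps w)" "w \<in> Ds - M"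
proof -
  show "res w \<in> outer_darts" "res (res w) = w" "eps w \<in> bigon_darts" "res' (res w) = res (eps w)"
    using assms by (elim insertE emptyE; cases "xp \<in> S"; cases "yq \<in> S";
        simp add: res_local res'_local config_eqs config_eqs' state_xy)+
  show "w \<in> Ds - M" using assms config_darts non_matching_darts by auto
qed

definition contract where
  "contract u = (if u \<in> bigon_darts then res u else u)"

lemma contract_outside: "u \<notin> bigon_darts \<Longrightarrow> contract u = u"
  by (simp add: contract_def)

lemma reduced_darts: "Ds' - M' = (Ds - M) - bigon_darts"
  using matching_darts by auto

lemma outside_local_darts:
  assumes "u \<in> Ds - M" "u \<notin> bigon_darts" "u \<notin> outer_darts"
  shows "u \<notin> local_darts"
  using assms matching_darts by auto

lemma curve_step_contract:
  assumes "(u, v) \<in> R"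
  shows "(contract u, contract v) \<in> (R' \<union> R'\<inverse>)\<^sup>*"
proof -
  from assms have u: "u \<in> Ds - M" and v: "v = eps u \<or> v = res u"
    unfolding curve_rel_def by blast+
  consider (bigon) "u \<in> bigon_darts" | (outer) "u \<in> outer_darts"
    | (away) "u \<notin> bigon_darts" "u \<notin> outer_darts"
    by blast
  then show ?thesis
  proof cases
    case bigon
    note w = bigon_dart[OF bigon]
    have "contract (res u) = res u" using w(1) local_darts_neq by (intro contract_outside) auto
    with v w bigon have "(contract u, contract v) = (res u, res' (res u)) \<or> contract v = contract u"
      by (auto simp: contract_def)
    moreover have "(res u, res' (res u)) \<in> R'" using outer_dart(6)[OF w(1)] by (intro curve_relI) auto
    ultimately show ?thesis by auto
  next
    case outer
    note x = outer_dart[OF outer]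
    have cu: "contract u = u" using outer local_darts_neq by (intro contract_outside) auto
    from v show ?thesis
    proof
      assume "v = eps u"
      then have "(contract u, contract v) = (u, eps' u)" using cu x(4,5) by (simp add: contract_def)
      moreover have "(u, eps' u) \<in> R'" using x(6) by (intro curve_relI) auto
      ultimately show ?thesis by auto
    next
      assume "v = res u"
      then have "contract v = u" using x(1,2) by (simp add: contract_def)
      then show ?thesis using cu by simp
    qed
  next
    case away
    have u': "u \<in> Ds" "u \<notin> M" using u by auto
    note g = away_from_config[OF u' outside_local_darts[OF u away]]
    have "(u, v) \<in> R'" using v g(1,3,5) by (intro curve_relI) auto
    moreover have "contract u = u" "contract v = v"
      using away v g(2,4) by (auto simp: contract_def)
    ultimately show ?thesis by auto
  qed
qed

lemma reduced_curve_step: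
  assumes "(u, v) \<in> R'"
  shows "(u, v) \<in> (R \<union> R\<inverse>)\<^sup>*"
proof -
  from assms have u: "u \<in> Ds' - M'" and v: "v = eps' u \<or> v = res' u"
    unfolding curve_rel_def by blast+
  have u2: "u \<in> Ds - M" "u \<notin> bigon_darts" using u reduced_darts by auto
  show ?thesis
  proof (cases "u \<in> outer_darts")
    case True
    note x = outer_dart[OF True]
    note w = bigon_dart[OF x(1)]
    from v show ?thesis
    proof
      assume "v = eps' u"
      then have "(u, v) \<in> R" using x(4) u2 by (simp add: curve_rel_def)
      then show ?thesis by auto
    next
      \<comment> \<open>the reduced arc from u is the path u, res u, eps (res u), res (eps (res u))
        through the bigon\<close>
      assume "v = res' u"
      have "(u, res u) \<in> R" using u2 by (simp add: curve_rel_def)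
      moreover have "(res u, eps (res u)) \<in> R" using w(5) by (simp add: curve_rel_def)
      moreover have "(eps (res u), res (eps (res u))) \<in> R"
        using bigon_dart(5)[OF w(3)] by (simp add: curve_rel_def)
      ultimately have "(u, res (eps (res u))) \<in> (R \<union> R\<inverse>)\<^sup>*"
        by (meson UnI1 r_into_rtrancl rtrancl_trans)
      then show ?thesis using \<open>v = res' u\<close> x(3) by simp
    qed
  next
    case False
    have u': "u \<in> Ds" "u \<notin> M" using u2 by auto
    note g = away_from_config[OF u' outside_local_darts[OF u2 False]]
    have "(u, v) \<in> R" using v g u2 by (auto simp: curve_rel_def)
    then show ?thesis by auto
  qed
qed

lemma contract_connected:
  assumes "u \<in> Ds - M"
  shows "(u, contract u) \<in> (R \<union> R\<inverse>)\<^sup>*"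
proof (cases "u \<in> bigon_darts")
  case True
  then have "(u, contract u) \<in> R" using assms by (simp add: curve_rel_def contract_def)
  then show ?thesis by auto
qed (simp add: contract_def)

lemma contract_image: "contract ` (Ds - M) = Ds' - M'"
proof
  show "contract ` (Ds - M) \<subseteq> Ds' - M'"
  proof
    fix b assume "b \<in> contract ` (Ds - M)"
    then obtain u where u: "u \<in> Ds - M" "b = contract u" by blast
    show "b \<in> Ds' - M'"
    proof (cases "u \<in> bigon_darts")
      case True
      then have "b = res u" using u(2) by (simp add: contract_def)
      then show ?thesis using outer_dart(6)[OF bigon_dart(1)[OF True]] by (simp only:)
    next
      case False
      then have "b = u" "u \<in> (Ds - M) - bigon_darts" using u contract_outside by simp_all
      then show ?thesis by (simp only: reduced_darts)
    qed
  qed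
  show "Ds' - M' \<subseteq> contract ` (Ds - M)"
  proof
    fix b assume "b \<in> Ds' - M'"
    then have "b \<in> (Ds - M) - bigon_darts" by (simp only: reduced_darts)
    then show "b \<in> contract ` (Ds - M)"
      using contract_outside[of b] by (intro image_eqI[where x = b]) simp_all
  qed
qed

lemma ncurves_reduce: "ncurves Ds eps sig M S = ncurves Ds' eps' sig M' S'"
  unfolding ncurves_def
  by (rule card_components_eq_if_contraction[OF contract_image curve_step_contract
        reduced_curve_step contract_connected])

end

context bigon_config
begin

abbreviation "M0 \<equiv> M - {xp, px, yq, qy}"

lemma eps_into_config: "d \<in> Ds \<Longrightarrow> eps d \<in> {xp, px, yq, qy} \<Longrightarrow> d \<in> {xp, px, yq, qy}"
  using eps_eps config_eqs config_eqs' by fastforce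

lemma eps_closed_M0: "\<forall>d\<in>M0. eps d \<in> M0"
  using eps_into_config eps_matching matching_subset by blast

lemma sum_states_M: "sum h (states eps M) =
    (\<Sum>T\<in>states eps M0. \<Sum>A\<in>{{}, {xp, px}}. \<Sum>B\<in>{{}, {yq, qy}}. h (T \<union> A \<union> B))"
proof -
  have "M = (M0 \<union> {xp, px}) \<union> {yq, qy}" using matching_darts by auto
  then have M: "states eps M = states eps ((M0 \<union> {xp, px}) \<union> {yq, qy})" by (rule arg_cong)
  have "(M0 \<union> {xp, px}) \<inter> {yq, qy} = {}" "M0 \<inter> {xp, px} = {}"
    and "\<forall>d\<in>M0 \<union> {xp, px}. eps d \<in> M0 \<union> {xp, px}" "\<forall>d\<in>{yq, qy}. eps d \<in> {yq, qy}"
    "\<forall>d\<in>{xp, px}. eps d \<in> {xp, px}"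
    using eps_closed_M0 config_eqs config_eqs' local_darts_neq by auto
  moreover have "states eps {xp, px} = {{}, {xp, px}}" "states eps {yq, qy} = {{}, {yq, qy}}"
    using states_edge config_eqs config_eqs' by metis+
  ultimately show ?thesis
    unfolding M using eps_closed_M0 by (simp only: sum_states_union)
qed

lemma sum_states_M': "sum h (states eps' M') = (\<Sum>T\<in>states eps M0. \<Sum>C\<in>{{}, {xp, yq}}. h (T \<union> C))"
proof -
  have M': "M' = M0 \<union> {xp, yq}" using matching_darts local_darts_neq by auto
  have "M0 \<inter> {xp, yq} = {}" "\<forall>d\<in>M0. eps' d \<in> M0" "\<forall>d\<in>{xp, yq}. eps' d \<in> {xp, yq}"
    using eps_closed_M0 by auto
  moreover have "states eps' M0 = states eps M0" by (rule states_cong) auto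
  moreover have "states eps' {xp, yq} = {{}, {xp, yq}}"
    using states_edge[of eps' xp] local_darts_neq by simp
  ultimately show ?thesis
    unfolding M' by (simp only: sum_states_union)
qed

lemma ncurves_reduce_states:
  assumes "T \<subseteq> M0" "A \<in> {{}, {xp, px}}" "B \<in> {{}, {yq, qy}}"
  shows "ncurves Ds eps sig M (T \<union> A \<union> B) =
    ncurves Ds' eps' sig M' (T \<union> (if (A = {}) = (B = {}) then {} else {xp, yq}))"
proof -
  have "bigon_states Ds eps sig M xp px p1 p2 q1 q2 qy yq (T \<union> A \<union> B)
      (T \<union> (if (A = {}) = (B = {}) then {} else {xp, yq}))"
    by (intro bigon_states.intro bigon_config_axioms bigon_states_axioms.intro)
      (use assms local_darts_neq in auto)
  then show ?thesis by (rule bigon_states.ncurves_reduce)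
qed

text \<open>States of xp and qy that agree give the curves of T, states that disagree those of T
  with xy in state 1; each extra matching edge in state 1 flips the sign.\<close>

lemma bracket_terms_at_1:
  assumes "T \<in> states eps M0"
  shows "(\<Sum>A\<in>{{}, {xp, px}}. \<Sum>B\<in>{{}, {yq, qy}}. bracket_term Ds eps sig M k 1 (T \<union> A \<union> B))
    = 2 * (\<Sum>C\<in>{{}, {xp, yq}}. bracket_term Ds' eps' sig M' k 1 (T \<union> C))"
proof -
  have T: "T \<subseteq> M0" using assms by (simp add: states_def)
  then have "finite T" using finite_subset[OF _ finite_darts] matching_subset by blast
  with T have card: "card (T \<union> {xp, px}) = card T + 2" "card (T \<union> {yq, qy}) = card T + 2"
    "card (T \<union> {xp, yq}) = card T + 2" "card (T \<union> {xp, px} \<union> {yq, qy}) = card T + 4"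
    using local_darts_neq by (auto simp: card_insert_if)
  have "(card T + 2) div 2 = card T div 2 + 1" "(card T + 4) div 2 = card T div 2 + 2" by simp_all
  with card show ?thesis
    using ncurves_reduce_states[OF T, of "{}" "{}"] ncurves_reduce_states[OF T, of "{xp, px}" "{yq, qy}"]
      ncurves_reduce_states[OF T, of "{xp, px}" "{}"] ncurves_reduce_states[OF T, of "{}" "{yq, qy}"]
    by (simp add: bracket_term_def algebra_simps)
qed

lemma bracket2_at_1_reduce: "bracket2 Ds eps sig M k 1 = 2 * bracket2 Ds' eps' sig M' k 1"
  unfolding bracket2_eq_sum sum_states_M sum_states_M' sum_distrib_left
  by (rule sum.cong[OF refl]) (simp only: bracket_terms_at_1 flip: sum_distrib_left)

abbreviation "inner_darts \<equiv> {px, p1, p2, q1, q2, qy}"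

lemma orbit3_outside_inner:
  "d \<in> Ds \<Longrightarrow> d \<notin> inner_darts \<Longrightarrow> orbit3 sig d \<inter> inner_darts = {}"
  using orbit3_disjoint[of px d] orbit3_disjoint[of qy d] config_darts
  unfolding vertex_orbits by auto

lemma orbit3_inner: "d \<in> inner_darts \<Longrightarrow> orbit3 sig d = {px, p1, p2} \<or> orbit3 sig d = {qy, q1, q2}"
  using orbit3_sig[of px d] orbit3_sig[of qy d] config_darts unfolding vertex_orbits by auto

lemma two_factor_extend:
  assumes F: "F \<in> two_factor_sets Ds' eps' sig M'"
    and ab: "(a = p1 \<and> b = q1) \<or> (a = p2 \<and> b = q2)"
  shows "F \<union> {px, qy, a, b} \<in> two_factor_sets Ds eps sig M"
proof -
  have F_sub: "F \<subseteq> Ds'" and F_eps: "\<And>d. d \<in> F \<Longrightarrow> eps' d \<in> F" and M_sub: "M' \<subseteq> F"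
    and F_card: "\<And>d. d \<in> Ds' \<Longrightarrow> card (orbit3 sig d \<inter> F) = 2"
    using F unfolding two_factor_sets_def by auto
  have xy: "xp \<in> F" "yq \<in> F" using M_sub matching_darts local_darts_neq by auto
  let ?G = "F \<union> {px, qy, a, b}"
  have "?G \<subseteq> Ds" using F_sub config_darts ab by auto
  moreover have "eps d \<in> ?G" if d: "d \<in> ?G" for d
  proof -
    consider "d \<in> F" "d \<noteq> xp" "d \<noteq> yq" | "d \<in> {xp, yq, px, qy, a, b}" using d by blast
    then show ?thesis
    proof cases
      case 1 then show ?thesis using F_eps[of d] by simp
    qed (use xy config_eqs config_eqs' ab in auto)
  qed
  moreover have "M \<subseteq> ?G" using M_sub by auto
  moreover have "card (orbit3 sig d \<inter> ?G) = 2" if "d \<in> Ds" for d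
  proof (cases "d \<in> inner_darts")
    case True
    have "F \<inter> inner_darts = {}" using F_sub by blast
    then have "{px, p1, p2} \<inter> ?G = {px, a}" "{qy, q1, q2} \<inter> ?G = {qy, b}"
      using ab local_darts_neq by auto
    moreover have "card {px, a} = 2" "card {qy, b} = 2" using ab local_darts_neq by auto
    ultimately show ?thesis using orbit3_inner[OF True] by auto
  next
    case False
    then have "orbit3 sig d \<inter> ?G = orbit3 sig d \<inter> F"
      using orbit3_outside_inner[OF that] ab by auto
    then show ?thesis using F_card[of d] that False by simp
  qed
  ultimately show ?thesis unfolding two_factor_sets_def by blast
qed

lemma two_factor_restrict:
  assumes F: "F \<in> two_factor_sets Ds eps sig M"
  shows "F - inner_darts \<in> two_factor_sets Ds' eps' sig M'"
    and "F = (F - inner_darts) \<union> {px, qy, p1, q1} \<or> F = (F - inner_darts) \<union> {px, qy, p2, q2}"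
proof -
  have F_sub: "F \<subseteq> Ds" and F_eps: "\<And>d. d \<in> F \<Longrightarrow> eps d \<in> F" and M_sub: "M \<subseteq> F"
    and F_card: "\<And>d. d \<in> Ds \<Longrightarrow> card (orbit3 sig d \<inter> F) = 2"
    using F unfolding two_factor_sets_def by auto
  have pq: "px \<in> F" "qy \<in> F" using M_sub matching_darts by auto
  have "card ({px, p1, p2} \<inter> F) = 2" using F_card[of px] config_darts vertex_orbits by simp
  then have "(p1 \<in> F) \<noteq> (p2 \<in> F)"
    using pq local_darts_neq by (cases "p1 \<in> F"; cases "p2 \<in> F") (auto simp: Int_insert_left)
  moreover have "p1 \<in> F \<longleftrightarrow> q1 \<in> F" "p2 \<in> F \<longleftrightarrow> q2 \<in> F"
    using F_eps config_eqs config_eqs' by metis+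
  ultimately show "F = (F - inner_darts) \<union> {px, qy, p1, q1} \<or> F = (F - inner_darts) \<union> {px, qy, p2, q2}"
    using pq by auto
  have "F - inner_darts \<subseteq> Ds'" using F_sub by auto
  moreover have "eps' d \<in> F - inner_darts" if d: "d \<in> F - inner_darts" for d
  proof (cases "d \<in> {xp, yq}")
    case False
    have "d \<in> Ds" using d F_sub by auto
    have "eps d \<notin> inner_darts"
    proof
      assume "eps d \<in> inner_darts"
      then have "eps (eps d) \<in> eps ` inner_darts" by blast
      then have "d \<in> {xp, q1, q2, p1, p2, yq}"
        using eps_eps[OF \<open>d \<in> Ds\<close>] config_eqs config_eqs' by simp
      then show False using d False by auto
    qed
    then show ?thesis using False F_eps d by auto
  qed (use M_sub matching_darts local_darts_neq in auto)
  moreover have "M' \<subseteq> F - inner_darts" using M_sub non_matching_darts by auto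
  moreover have "card (orbit3 sig d \<inter> (F - inner_darts)) = 2" if "d \<in> Ds'" for d
  proof -
    have "orbit3 sig d \<inter> (F - inner_darts) = orbit3 sig d \<inter> F"
      using orbit3_outside_inner[of d] that by auto
    then show ?thesis using F_card[of d] that by simp
  qed
  ultimately show "F - inner_darts \<in> two_factor_sets Ds' eps' sig M'"
    unfolding two_factor_sets_def by blast
qed

lemma two_factors_reduce: "two_factors_M Ds eps sig M = 2 * two_factors_M Ds' eps' sig M'"
proof -
  let ?F' = "two_factor_sets Ds' eps' sig M'"
  let ?add1 = "\<lambda>F. F \<union> {px, qy, p1, q1}" and ?add2 = "\<lambda>F. F \<union> {px, qy, p2, q2}"
  have F'_sub: "F \<subseteq> Ds'" if "F \<in> ?F'" for F using that unfolding two_factor_sets_def by blast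
  have "finite ?F'" using F'_sub finite_darts by (metis Diff_subset PowI finite_Pow_iff finite_subset subsetI)
  have "two_factor_sets Ds eps sig M = ?add1 ` ?F' \<union> ?add2 ` ?F'"
  proof
    show "two_factor_sets Ds eps sig M \<subseteq> ?add1 ` ?F' \<union> ?add2 ` ?F'"
    proof
      fix F assume "F \<in> two_factor_sets Ds eps sig M"
      from two_factor_restrict[OF this] show "F \<in> ?add1 ` ?F' \<union> ?add2 ` ?F'" by blast
    qed
    show "?add1 ` ?F' \<union> ?add2 ` ?F' \<subseteq> two_factor_sets Ds eps sig M"
      using two_factor_extend by blast
  qed
  moreover have "inj_on ?add1 ?F'" "inj_on ?add2 ?F'"
    by (rule inj_on_inverseI[where g = "\<lambda>G. G - inner_darts"], use F'_sub in auto)+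
  moreover have "?add1 ` ?F' \<inter> ?add2 ` ?F' = {}"
    using F'_sub local_darts_neq by auto
  ultimately show ?thesis
    using \<open>finite ?F'\<close> unfolding two_factors_M_eq_card by (simp add: card_Un_disjoint card_image)
qed

end

theorem lemma2p4:
  fixes Ds :: "'d set" and eps sig :: "'d \<Rightarrow> 'd" and M :: "'d set" and k :: nat
    and xp px p1 p2 q1 q2 qy yq :: 'd
  assumes "pm_drawing Ds eps sig M"
    and "config Ds eps sig M xp px p1 p2 q1 q2 qy yq"
  shows "bracket2 Ds eps sig M k 1 =
           2 * bracket2 (Ds - {px, p1, p2, q1, q2, qy}) (eps(xp := yq, yq := xp)) sig
                 (M - {px, qy}) k 1
       \<and> (planar_rot Ds eps sig \<longrightarrow>
           two_factors_M Ds eps sig M =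
           2 * two_factors_M (Ds - {px, p1, p2, q1, q2, qy}) (eps(xp := yq, yq := xp)) sig
                 (M - {px, qy}))"
proof -
  interpret bigon_config Ds eps sig M xp px p1 p2 q1 q2 qy yq
    using assms by (intro bigon_config.intro matching_drawing.intro bigon_config_axioms.intro)
  show ?thesis using bracket2_at_1_reduce two_factors_reduce by simp
qed

end
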